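(* Let $\gamma<1$, $\gamma\neq 0$. The following two conditions are equivalent. (A) For all $\gamma'\in(\gamma,1)$, $$\lim_{x\uparrow\infty}\frac{u_0'(x)}{x^{\gamma'-1}}=0,$$ and for all $\gamma''<\gamma$, $$\lim_{x\uparrow\infty}\frac{u_0'(x)}{x^{\gamma''-1}}=\infty.$$ (B) The measure $\mu$ has finite support with right boundary at $\frac{1}{1-\gamma}$, i.e. $$\inf\{y>0:\mu((y,\infty))=0\}=\frac{1}{1-\gamma}.$$
   Context: Let $\mu$ be a nonzero finite positive Borel measure on $(0,\infty)$ such that $\int y e^{yz}\mu(dy)<\infty$ for every $z\in\mathbb{R}$. Define $h(z,t):=\int e^{yz-\frac12 y^2 t}\mu(dy)$ for $(z,t)\in\mathbb{R}\times[0,\infty)$. For each $t$, the map $z\mapsto h(z,t)$ is strictly increasing with range $(0,\infty)$. Let $u:(0,\infty)\times[0,\infty)\to\mathbb{R}$ be smooth, strictly increasing and strictly concave in $x$, solving $u_t=\frac12 u_x^2/u_{xx}$, and related to $h$ by $u_x(h(z,t),t)=e^{-z+t/2}$ for all $(z,t)$. Write $u_0(x):=u(x,0)$. *)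

theory Defs
  imports "HOL-Analysis.Analysis"
begin

definition hfun :: "real measure \<Rightarrow> real \<Rightarrow> real \<Rightarrow> real" where
  "hfun \<mu> z t = (\<integral>y. exp (y * z - y\<^sup>2 * t / 2) \<partial>\<mu>)"

text \<open>Smoothness (C-infinity) of a function of two real variables on a set S:
  all iterated partial derivatives (one-sided at boundary points, i.e. taken
  within S) exist and are continuous on S.\<close>
definition smooth2_on :: "(real \<times> real) set \<Rightarrow> (real \<times> real \<Rightarrow> real) \<Rightarrow> bool" where
  "smooth2_on S f \<longleftrightarrow>
     (\<exists>F. f \<in> F \<and>
        (\<forall>g\<in>F. continuous_on S g \<and>
           (\<exists>g1 g2. g1 \<in> F \<and> g2 \<in> F \<and>
              (\<forall>p\<in>S. ((\<lambda>s. g (s, snd p)) has_real_derivative g1 p)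
                         (at (fst p) within {s. (s, snd p) \<in> S}) \<and>
                      ((\<lambda>s. g (fst p, s)) has_real_derivative g2 p)
                         (at (snd p) within {s. (fst p, s) \<in> S})))))"

end

theory Submission
  imports Defs "HOL-Real_Asymp.Real_Asymp"
begin

text \<open>
  At time 0 the relation between \<open>u\<^sub>x\<close> and \<open>h\<close> reads \<open>u\<^sub>0'(M z) = exp (-z)\<close>, where
  \<open>M z = \<integral> exp (y z) d\<mu>\<close> is the moment generating function of \<open>\<mu>\<close>; it maps \<open>[0,\<infinity>)\<close>
  onto \<open>[M 0,\<infinity>)\<close>, and nothing else about \<open>u\<close> (nor \<open>\<gamma> \<noteq> 0\<close>) is needed. If \<open>\<mu>\<close>
  charges \<open>(B,\<infinity>)\<close> then \<open>M z \<ge> \<mu>(B,\<infinity>) exp (B z)\<close>, whence \<open>u\<^sub>0'(x) \<ge> c x powr (-1/B)\<close>;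
  if \<open>\<mu>\<close> vanishes on \<open>(b,\<infinity>)\<close> then \<open>M z \<le> \<mu>(\<real>) exp (b z)\<close>, whence
  \<open>u\<^sub>0'(x) \<le> C x powr (-1/b)\<close>. So \<open>u\<^sub>0'(x) / x powr (q - 1)\<close> tends to \<open>0\<close> for
  \<open>q > 1 - 1/b\<close> and to \<open>\<infinity>\<close> for \<open>q < 1 - 1/B\<close>: the critical exponent is \<open>1 - 1/\<beta>\<close> for
  the right end \<open>\<beta>\<close> of the support of \<open>\<mu>\<close>.
\<close>

lemma divide_powr_eq:
  fixes x c a q :: real
  assumes "0 < x" "0 < c"
  shows "(x / c) powr (- 1 / a) / x powr (q - 1) = c powr (1 / a) * x powr (1 - q - 1 / a)"
  using assms by (simp add: powr_divide powr_diff powr_minus powr_add field_simps)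

lemma greaterThan_eq_UN_greaterThan: "{a<..} = (\<Union>n. {a + 1 / Suc n<..})" for a :: real
proof (intro set_eqI iffI)
  fix x assume "x \<in> {a<..}"
  then obtain n where "inverse (real (Suc n)) < x - a"
    using reals_Archimedean[of "x - a"] by auto
  then have "a + 1 / Suc n < x"
    by (simp add: inverse_eq_divide)
  then show "x \<in> (\<Union>n. {a + 1 / Suc n<..})"
    by blast
next
  fix x assume "x \<in> (\<Union>n. {a + 1 / Suc n<..})"
  then obtain n where "a + 1 / Suc n < x" by blast
  moreover have "0 < 1 / real (Suc n)" by simp
  ultimately have "a < x" by linarith
  then show "x \<in> {a<..}" by simp
qed

lemma less_one_minus_inverse_iff:
  fixes b q :: real
  assumes "0 < b" "q < 1"
  shows "q < 1 - 1 / b \<longleftrightarrow> 1 / (1 - q) < b"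
  using assms by (simp add: field_simps)

lemma one_minus_inverse_less_iff:
  fixes b q :: real
  assumes "0 < b" "q < 1"
  shows "1 - 1 / b < q \<longleftrightarrow> b < 1 / (1 - q)"
  using assms by (simp add: field_simps)

locale exp_moment_measure = finite_measure \<mu> for \<mu> :: "real measure" +
  assumes sets_eq_borel: "sets \<mu> = sets borel"
    and null_nonpos: "emeasure \<mu> {..0} = 0"
    and nonzero: "emeasure \<mu> UNIV \<noteq> 0"
    and integrable_mult_exp: "\<And>z. integrable \<mu> (\<lambda>y. y * exp (y * z))"
begin

definition mgf :: "real \<Rightarrow> real" where
  "mgf z = (\<integral>y. exp (y * z) \<partial>\<mu>)"

definition null_tails :: "real set" where
  "null_tails = {y. y > 0 \<and> emeasure \<mu> {y<..} = 0}"

lemma space_eq_UNIV: "space \<mu> = UNIV"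
  using sets_eq_imp_space_eq[OF sets_eq_borel] by simp

lemma measure_pos: "emeasure \<mu> A \<noteq> 0 \<Longrightarrow> 0 < measure \<mu> A"
  by (simp add: emeasure_eq_measure zero_less_measure_iff)

lemma AE_pos: "AE y in \<mu>. 0 < y"
  by (rule AE_I'[of "{..0}"]) (auto simp: null_nonpos null_setsI sets_eq_borel)

lemma integrable_exp_mult: "integrable \<mu> (\<lambda>y. exp (y * z))"
proof (rule Bochner_Integration.integrable_bound)
  show "integrable \<mu> (\<lambda>y. y * exp (y * z) + exp \<bar>z\<bar>)"
    using integrable_mult_exp by auto
  show "(\<lambda>y. exp (y * z)) \<in> borel_measurable \<mu>"
    by (subst measurable_cong_sets[OF sets_eq_borel refl]) measurable
  show "AE y in \<mu>. norm (exp (y * z)) \<le> norm (y * exp (y * z) + exp \<bar>z\<bar>)"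
    using AE_pos
  proof eventually_elim
    case (elim y)
    have "exp (y * z) \<le> y * exp (y * z) + exp \<bar>z\<bar>"
    proof (cases "y \<ge> 1")
      case True
      then have "exp (y * z) \<le> y * exp (y * z)" by simp
      then show ?thesis by (smt (verit) exp_gt_zero)
    next
      case False
      then have "y * z \<le> \<bar>z\<bar>"
        using elim by (smt (verit) abs_ge_self mult_left_le_one_le mult_left_mono)
      then show ?thesis using elim by (smt (verit) exp_mono mult_pos_pos exp_gt_zero)
    qed
    then show ?case using elim by simp
  qed
qed

lemma convex_mgf: "convex_on UNIV mgf"
  unfolding convex_on_def
proof (intro conjI ballI allI impI)
  fix a b u v :: real assume uv: "0 \<le> u" "0 \<le> v" "u + v = 1"
  have "mgf (u *\<^sub>R a + v *\<^sub>R b) = (\<integral>y. exp (u * (y * a) + v * (y * b)) \<partial>\<mu>)"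
    unfolding mgf_def by (simp add: algebra_simps)
  also have "\<dots> \<le> (\<integral>y. u * exp (y * a) + v * exp (y * b) \<partial>\<mu>)"
  proof (rule integral_mono)
    show "integrable \<mu> (\<lambda>y. exp (u * (y * a) + v * (y * b)))"
      using integrable_exp_mult[of "u * a + v * b"] by (simp add: algebra_simps)
    show "integrable \<mu> (\<lambda>y. u * exp (y * a) + v * exp (y * b))"
      using integrable_exp_mult by auto
    show "exp (u * (y * a) + v * (y * b)) \<le> u * exp (y * a) + v * exp (y * b)" for y
      using exp_convex uv unfolding convex_on_def by auto
  qed
  also have "\<dots> = u * mgf a + v * mgf b"
    unfolding mgf_def using integrable_exp_mult by simp
  finally show "mgf (u *\<^sub>R a + v *\<^sub>R b) \<le> u * mgf a + v * mgf b" .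
qed simp

lemma continuous_on_mgf: "continuous_on UNIV mgf"
  by (rule convex_on_continuous[OF open_UNIV convex_mgf])

lemma mgf_lower_bound:
  assumes "0 \<le> z"
  shows "measure \<mu> {B<..} * exp (B * z) \<le> mgf z"
proof -
  have "measure \<mu> {B<..} * exp (B * z) = (\<integral>y. indicator {B<..} y * exp (B * z) \<partial>\<mu>)"
    using space_eq_UNIV by simp
  also have "\<dots> \<le> mgf z"
    unfolding mgf_def
  proof (rule integral_mono)
    show "integrable \<mu> (\<lambda>y. indicator {B<..} y * exp (B * z))"
      by (intro integrable_mult_left integrable_real_indicator)
         (auto simp: sets_eq_borel less_top[symmetric])
    show "indicator {B<..} y * exp (B * z) \<le> exp (y * z)" for y
      using assms by (auto simp: indicator_def intro!: mult_right_mono)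
  qed (rule integrable_exp_mult)
  finally show ?thesis .
qed

lemma mgf_upper_bound:
  assumes "emeasure \<mu> {b<..} = 0" "0 \<le> z"
  shows "mgf z \<le> measure \<mu> UNIV * exp (b * z)"
proof -
  have "AE y in \<mu>. y \<le> b"
    by (rule AE_I'[of "{b<..}"]) (auto simp: assms(1) null_setsI sets_eq_borel)
  then have "mgf z \<le> (\<integral>y. exp (b * z) \<partial>\<mu>)"
    unfolding mgf_def
    by (intro integral_mono_AE integrable_exp_mult)
       (auto elim!: eventually_mono intro: mult_right_mono assms(2))
  also have "\<dots> = measure \<mu> UNIV * exp (b * z)"
    using space_eq_UNIV by simp
  finally show ?thesis .
qed

lemma bdd_below_null_tails: "bdd_below null_tails"
  unfolding null_tails_def by (rule bdd_belowI[of _ 0]) auto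

lemma Inf_null_tails_mem:
  assumes "null_tails \<noteq> {}"
  shows "Inf null_tails \<in> null_tails"
proof -
  have "emeasure \<mu> {Inf null_tails + 1 / Suc n<..} = 0" for n
  proof -
    obtain s where s: "s \<in> null_tails" "s < Inf null_tails + 1 / Suc n"
      using cInf_lessD[OF assms, of "Inf null_tails + 1 / Suc n"] by auto
    then have "emeasure \<mu> {Inf null_tails + 1 / Suc n<..} \<le> emeasure \<mu> {s<..}"
      by (intro emeasure_mono) (auto simp: sets_eq_borel)
    with s show ?thesis by (simp add: null_tails_def)
  qed
  then have null: "emeasure \<mu> {Inf null_tails<..} = 0"
    unfolding greaterThan_eq_UN_greaterThan[of "Inf null_tails"]
    by (simp add: emeasure_UN_eq_0 sets_eq_borel subset_eq)
  have "Inf null_tails \<noteq> 0"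
  proof
    assume "Inf null_tails = 0"
    then have "emeasure \<mu> ({..0} \<union> {0<..}) \<le> 0"
      using null null_nonpos emeasure_subadditive[of "{..0}" \<mu> "{0<..}"]
      by (simp add: sets_eq_borel)
    moreover have "{..0::real} \<union> {0<..} = UNIV" by auto
    ultimately show False using nonzero by simp
  qed
  moreover have "0 \<le> Inf null_tails"
    using assms by (intro cInf_greatest) (auto simp: null_tails_def)
  ultimately show ?thesis using null by (simp add: null_tails_def)
qed

lemma null_tails_eq_atLeast:
  assumes "null_tails \<noteq> {}"
  shows "null_tails = {Inf null_tails..}"
proof (intro set_eqI iffI)
  show "b \<in> {Inf null_tails..}" if "b \<in> null_tails" for b
    using cInf_lower[OF that bdd_below_null_tails] by simp
  show "b \<in> null_tails" if b: "b \<in> {Inf null_tails..}" for b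
  proof -
    have Inf: "0 < Inf null_tails" "emeasure \<mu> {Inf null_tails<..} = 0"
      using Inf_null_tails_mem[OF assms] by (auto simp: null_tails_def)
    have "emeasure \<mu> {b<..} \<le> emeasure \<mu> {Inf null_tails<..}"
      using b by (intro emeasure_mono) (auto simp: sets_eq_borel)
    with Inf b show ?thesis by (auto simp: null_tails_def)
  qed
qed

lemma exists_charged_tail: "\<exists>B>0. 0 < measure \<mu> {B<..}"
proof -
  obtain B where "0 < B" "B \<notin> null_tails"
  proof (cases "null_tails = {}")
    case False
    then have "0 < Inf null_tails"
      using Inf_null_tails_mem by (simp add: null_tails_def)
    moreover have "Inf null_tails / 2 \<notin> {Inf null_tails..}"
      using calculation by simp
    then have "Inf null_tails / 2 \<notin> null_tails"
      using null_tails_eq_atLeast[OF False] by simp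
    ultimately show ?thesis using that[of "Inf null_tails / 2"] by simp
  qed (use that[of 1] in auto)
  then show ?thesis
    by (intro exI[of _ B]) (auto simp: measure_pos null_tails_def)
qed

lemma mgf_pos: "0 \<le> z \<Longrightarrow> 0 < mgf z"
  using exists_charged_tail mgf_lower_bound
  by (metis exp_gt_zero mult_pos_pos order.strict_trans2)

lemma mgf_surj:
  assumes "mgf 0 \<le> x"
  shows "\<exists>z\<ge>0. mgf z = x"
proof -
  obtain B where B: "0 < B" "0 < measure \<mu> {B<..}"
    using exists_charged_tail by blast
  define c where "c = measure \<mu> {B<..}"
  define n where "n = \<bar>ln (x / c)\<bar> / B"
  have "0 < x" using assms mgf_pos[of 0] by simp
  then have "x / c = exp (ln (x / c))"
    using B by (simp add: c_def)
  also have "\<dots> \<le> exp (B * n)"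
    using B by (simp add: n_def)
  finally have "x / c \<le> exp (B * n)" .
  then have "x \<le> c * exp (B * n)"
    using B by (simp add: c_def divide_le_eq mult.commute)
  also have "\<dots> \<le> mgf n"
    using mgf_lower_bound[of n B] B by (simp add: c_def n_def)
  finally show ?thesis
    using IVT'[of mgf 0 x n] assms B continuous_on_subset[OF continuous_on_mgf]
    by (force simp: n_def)
qed

context
  fixes du0 :: "real \<Rightarrow> real"
  assumes du0_mgf: "\<And>z. 0 \<le> z \<Longrightarrow> du0 (mgf z) = exp (- z)"
begin

lemma du0_pos: "mgf 0 \<le> x \<Longrightarrow> 0 < du0 x"
  using mgf_surj du0_mgf by force

lemma du0_upper_bound:
  assumes "b \<in> null_tails" "mgf 0 \<le> x"
  shows "du0 x \<le> (x / measure \<mu> UNIV) powr (- 1 / b)"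
proof -
  obtain z where z: "0 \<le> z" "mgf z = x"
    using mgf_surj assms(2) by blast
  have b: "0 < b" "emeasure \<mu> {b<..} = 0"
    using assms(1) by (auto simp: null_tails_def)
  have M: "0 < measure \<mu> UNIV"
    using measure_pos nonzero by blast
  have "x / measure \<mu> UNIV \<le> exp (b * z)"
    using mgf_upper_bound[OF b(2) z(1)] z M by (simp add: divide_le_eq mult.commute)
  then have "exp (b * z) powr (- 1 / b) \<le> (x / measure \<mu> UNIV) powr (- 1 / b)"
    using b M mgf_pos[OF z(1)] z by (intro powr_mono2') auto
  moreover have "exp (b * z) powr (- 1 / b) = exp (- z)"
    using b by (simp add: powr_def)
  ultimately show ?thesis
    using du0_mgf[OF z(1)] unfolding z(2) by simp
qed

lemma du0_lower_bound:
  assumes "0 < B" "B \<notin> null_tails" "mgf 0 \<le> x"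
  shows "(x / measure \<mu> {B<..}) powr (- 1 / B) \<le> du0 x"
proof -
  obtain z where z: "0 \<le> z" "mgf z = x"
    using mgf_surj assms(3) by blast
  have c: "0 < measure \<mu> {B<..}"
    using assms measure_pos by (auto simp: null_tails_def)
  have "exp (B * z) \<le> x / measure \<mu> {B<..}"
    using mgf_lower_bound[OF z(1), of B] z c by (simp add: le_divide_eq mult.commute)
  then have "(x / measure \<mu> {B<..}) powr (- 1 / B) \<le> exp (B * z) powr (- 1 / B)"
    using assms(1) by (intro powr_mono2') auto
  moreover have "exp (B * z) powr (- 1 / B) = exp (- z)"
    using assms(1) by (simp add: powr_def)
  ultimately show ?thesis
    using du0_mgf[OF z(1)] unfolding z(2) by simp
qed

lemma tendsto_zero_if_null_tail:
  assumes "b \<in> null_tails" "1 - 1 / b < q"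
  shows "((\<lambda>x. du0 x / x powr (q - 1)) \<longlongrightarrow> 0) at_top"
proof (rule tendsto_sandwich)
  define C where "C = measure \<mu> UNIV"
  have C: "0 < C"
    using measure_pos nonzero by (simp add: C_def)
  show "eventually (\<lambda>x. 0 \<le> du0 x / x powr (q - 1)) at_top"
    using eventually_ge_at_top[of "mgf 0"]
    by eventually_elim (simp add: du0_pos less_imp_le)
  show "eventually (\<lambda>x. du0 x / x powr (q - 1) \<le> C powr (1 / b) * x powr (1 - q - 1 / b)) at_top"
    using eventually_ge_at_top[of "mgf 0"]
  proof eventually_elim
    case (elim x)
    then have "0 < x"
      using mgf_pos[of 0] by simp
    then have "du0 x / x powr (q - 1) \<le> (x / C) powr (- 1 / b) / x powr (q - 1)"
      using du0_upper_bound[OF assms(1) elim] by (simp add: C_def divide_right_mono)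
    then show ?case
      using divide_powr_eq[OF \<open>0 < x\<close> C] by simp
  qed
  show "((\<lambda>x. C powr (1 / b) * x powr (1 - q - 1 / b)) \<longlongrightarrow> 0) at_top"
    using tendsto_mult[OF tendsto_const tendsto_neg_powr[OF _ filterlim_ident]] assms(2)
    by fastforce
qed simp

lemma filterlim_at_top_if_charged_tail:
  assumes "0 < B" "B \<notin> null_tails" "q < 1 - 1 / B"
  shows "filterlim (\<lambda>x. du0 x / x powr (q - 1)) at_top at_top"
proof (rule filterlim_at_top_mono)
  define c where "c = measure \<mu> {B<..}"
  have c: "0 < c"
    using assms measure_pos by (auto simp: null_tails_def c_def)
  show "filterlim (\<lambda>x. c powr (1 / B) * x powr (1 - q - 1 / B)) at_top at_top"
    using c assms(3)
    by (intro filterlim_tendsto_pos_mult_at_top[OF tendsto_const] real_powr_at_top) auto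
  show "eventually (\<lambda>x. c powr (1 / B) * x powr (1 - q - 1 / B) \<le> du0 x / x powr (q - 1)) at_top"
    using eventually_ge_at_top[of "mgf 0"]
  proof eventually_elim
    case (elim x)
    then have "0 < x"
      using mgf_pos[of 0] by simp
    then have "(x / c) powr (- 1 / B) / x powr (q - 1) \<le> du0 x / x powr (q - 1)"
      using du0_lower_bound[OF assms(1,2) elim] by (simp add: c_def divide_right_mono)
    then show ?case
      using divide_powr_eq[OF \<open>0 < x\<close> c] by simp
  qed
qed

lemma null_tails_eq_if_critical_exponent:
  assumes "\<gamma> < 1"
    and decay: "\<And>q. \<gamma> < q \<Longrightarrow> q < 1 \<Longrightarrow> ((\<lambda>x. du0 x / x powr (q - 1)) \<longlongrightarrow> 0) at_top"
    and growth: "\<And>q. q < \<gamma> \<Longrightarrow> filterlim (\<lambda>x. du0 x / x powr (q - 1)) at_top at_top"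
  shows "null_tails = {1 / (1 - \<gamma>)..}"
proof -
  have contra: False
    if "((\<lambda>x. du0 x / x powr (q - 1)) \<longlongrightarrow> 0) at_top"
       "filterlim (\<lambda>x. du0 x / x powr (q - 1)) at_top at_top" for q
    using not_tendsto_and_filterlim_at_infinity[OF _ that(1) filterlim_at_top_imp_at_infinity[OF that(2)]]
    by simp
  have above: "b \<in> null_tails" if b: "1 / (1 - \<gamma>) < b" for b
  proof (rule ccontr)
    assume b_charged: "b \<notin> null_tails"
    have "0 < 1 / (1 - \<gamma>)"
      using assms(1) by simp
    with b have "0 < b"
      by linarith
    with b have "\<gamma> < 1 - 1 / b"
      using less_one_minus_inverse_iff assms(1) by simp
    moreover define q where "q = (\<gamma> + (1 - 1 / b)) / 2"
    ultimately have "\<gamma> < q" "q < 1 - 1 / b"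
      by (simp_all add: q_def)
    moreover have "0 < 1 / b"
      using \<open>0 < b\<close> by simp
    ultimately have "q < 1"
      by linarith
    with \<open>\<gamma> < q\<close> \<open>q < 1 - 1 / b\<close> show False
      using contra[OF decay filterlim_at_top_if_charged_tail[OF \<open>0 < b\<close> b_charged]] by blast
  qed
  have below: "1 / (1 - \<gamma>) \<le> b" if b: "b \<in> null_tails" for b
  proof (rule ccontr)
    assume "\<not> 1 / (1 - \<gamma>) \<le> b"
    moreover have "0 < b"
      using b by (simp add: null_tails_def)
    ultimately have "1 - 1 / b < \<gamma>"
      using one_minus_inverse_less_iff assms(1) by simp
    then show False
      using contra[of "(\<gamma> + (1 - 1 / b)) / 2"] growth tendsto_zero_if_null_tail[OF b]
      by simp
  qed
  have "null_tails \<noteq> {}"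
    using above[of "1 / (1 - \<gamma>) + 1"] by auto
  moreover have "Inf null_tails = 1 / (1 - \<gamma>)"
  proof (rule antisym)
    show "Inf null_tails \<le> 1 / (1 - \<gamma>)"
      using cInf_superset_mono[OF _ bdd_below_null_tails, of "{1 / (1 - \<gamma>)<..}"] above
      by force
    show "1 / (1 - \<gamma>) \<le> Inf null_tails"
      using calculation below by (intro cInf_greatest)
  qed
  ultimately show ?thesis
    using null_tails_eq_atLeast by simp
qed

lemma critical_exponent_if_null_tails_eq:
  assumes "\<gamma> < 1" "null_tails = {1 / (1 - \<gamma>)..}"
  shows "(\<forall>q. \<gamma> < q \<and> q < 1 \<longrightarrow> ((\<lambda>x. du0 x / x powr (q - 1)) \<longlongrightarrow> 0) at_top) \<and>
         (\<forall>q. q < \<gamma> \<longrightarrow> filterlim (\<lambda>x. du0 x / x powr (q - 1)) at_top at_top)"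
proof (intro conjI allI impI)
  fix q assume "\<gamma> < q \<and> q < 1"
  then show "((\<lambda>x. du0 x / x powr (q - 1)) \<longlongrightarrow> 0) at_top"
    using tendsto_zero_if_null_tail[of "1 / (1 - \<gamma>)"] assms by simp
next
  fix q assume q: "q < \<gamma>"
  define B where "B = (1 / (1 - q) + 1 / (1 - \<gamma>)) / 2"
  have "1 / (1 - q) < 1 / (1 - \<gamma>)"
    using q assms(1) by (simp add: field_simps)
  then have "1 / (1 - q) < B" "B < 1 / (1 - \<gamma>)"
    by (auto simp: B_def)
  moreover have "0 < 1 / (1 - q)"
    using q assms(1) by simp
  ultimately have "0 < B"
    by linarith
  with \<open>1 / (1 - q) < B\<close> have "q < 1 - 1 / B"
    using less_one_minus_inverse_iff q assms(1) by simp
  moreover have "B \<notin> null_tails"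
    using \<open>B < 1 / (1 - \<gamma>)\<close> assms(2) by simp
  ultimately show "filterlim (\<lambda>x. du0 x / x powr (q - 1)) at_top at_top"
    using filterlim_at_top_if_charged_tail \<open>0 < B\<close> by blast
qed

lemma critical_exponent_iff_right_end:
  assumes "\<gamma> < 1"
  shows "((\<forall>q. \<gamma> < q \<and> q < 1 \<longrightarrow> ((\<lambda>x. du0 x / x powr (q - 1)) \<longlongrightarrow> 0) at_top) \<and>
          (\<forall>q. q < \<gamma> \<longrightarrow> filterlim (\<lambda>x. du0 x / x powr (q - 1)) at_top at_top))
     \<longleftrightarrow> null_tails \<noteq> {} \<and> Inf null_tails = 1 / (1 - \<gamma>)"
    (is "?decay \<and> ?growth \<longleftrightarrow> _")
proof
  assume "?decay \<and> ?growth"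
  then have "null_tails = {1 / (1 - \<gamma>)..}"
    using null_tails_eq_if_critical_exponent[OF assms] by blast
  then show "null_tails \<noteq> {} \<and> Inf null_tails = 1 / (1 - \<gamma>)"
    by auto
next
  assume "null_tails \<noteq> {} \<and> Inf null_tails = 1 / (1 - \<gamma>)"
  then show "?decay \<and> ?growth"
    using null_tails_eq_atLeast critical_exponent_if_null_tails_eq[OF assms] by simp
qed

end

end

theorem lemma6:
  fixes \<mu> :: "real measure"
    and u ux uxx ut :: "real \<Rightarrow> real \<Rightarrow> real"
    and \<gamma> :: real
  assumes mu_sets: "sets \<mu> = sets borel"
    and mu_finite: "finite_measure \<mu>"
    and mu_pos: "emeasure \<mu> {..0} = 0"
    and mu_nonzero: "emeasure \<mu> UNIV \<noteq> 0"
    and mu_int: "\<And>z. integrable \<mu> (\<lambda>y. y * exp (y * z))"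
    and u_smooth: "smooth2_on ({0<..} \<times> {0..}) (\<lambda>(x, t). u x t)"
    and ux: "\<And>x t. x > 0 \<Longrightarrow> t \<ge> 0 \<Longrightarrow> ((\<lambda>s. u s t) has_real_derivative ux x t) (at x)"
    and uxx: "\<And>x t. x > 0 \<Longrightarrow> t \<ge> 0 \<Longrightarrow> ((\<lambda>s. ux s t) has_real_derivative uxx x t) (at x)"
    and ut: "\<And>x t. x > 0 \<Longrightarrow> t \<ge> 0 \<Longrightarrow>
               ((\<lambda>s. u x s) has_real_derivative ut x t) (at t within {0..})"
    and u_incr: "\<And>t. t \<ge> 0 \<Longrightarrow> strict_mono_on {0<..} (\<lambda>x. u x t)"
    and u_concave: "\<And>t x y a. t \<ge> 0 \<Longrightarrow> x > 0 \<Longrightarrow> y > 0 \<Longrightarrow> x \<noteq> y \<Longrightarrow> 0 < a \<Longrightarrow> a < 1 \<Longrightarrow>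
               u (a * x + (1 - a) * y) t > a * u x t + (1 - a) * u y t"
    and pde: "\<And>x t. x > 0 \<Longrightarrow> t \<ge> 0 \<Longrightarrow> ut x t = (1/2) * (ux x t)\<^sup>2 / uxx x t"
    and rel: "\<And>z t. t \<ge> 0 \<Longrightarrow> ux (hfun \<mu> z t) t = exp (- z + t / 2)"
    and gamma: "\<gamma> < 1" "\<gamma> \<noteq> 0"
  shows "((\<forall>\<gamma>'. \<gamma> < \<gamma>' \<and> \<gamma>' < 1 \<longrightarrow>
              ((\<lambda>x. ux x 0 / x powr (\<gamma>' - 1)) \<longlongrightarrow> 0) at_top) \<and>
          (\<forall>\<gamma>''. \<gamma>'' < \<gamma> \<longrightarrow>
              filterlim (\<lambda>x. ux x 0 / x powr (\<gamma>'' - 1)) at_top at_top))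
     \<longleftrightarrow>
         ({y. y > 0 \<and> emeasure \<mu> {y<..} = 0} \<noteq> {} \<and>
          Inf {y. y > 0 \<and> emeasure \<mu> {y<..} = 0} = 1 / (1 - \<gamma>))"
proof -
  interpret exp_moment_measure \<mu>
    by (intro exp_moment_measure.intro exp_moment_measure_axioms.intro mu_finite)
       (fact mu_sets mu_pos mu_nonzero mu_int)+
  have "ux (mgf z) 0 = exp (- z)" for z
    using rel[of 0 z] by (simp add: hfun_def mgf_def)
  then show ?thesis
    using critical_exponent_iff_right_end[of "\<lambda>x. ux x 0" \<gamma>] gamma(1)
    by (simp add: null_tails_def)
qed

end
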